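(* In the linear–quadratic example, let $(p_i)_{i\ge0}\subset[0,1]$, $Q_n=\prod_{i=0}^n(1-p_i)$, and $p^*=1-\prod_{i=0}^\infty(1-p_i)$. Define the real sequence $(\bar X^n_T)_{n\ge0}$ by $\bar X^0_T=\bar X^{\rm MFC}_T$ and $$\bar X^{n+1}_T=Q_n\,\bar X^{\rm MFC}_T+(1-Q_n)\,\tilde{\bar X}^{n+1}_T,\qquad \tilde{\bar X}^{n+1}_T=e^{-T}x_0+\tfrac12q\,\bar X^n_T\big(1-e^{-2T}\big).$$ Then: (i) if $(\bar X^n_T)_n$ converges, its limit equals $(1-p^* )\bar X^{\rm MFC}_T+p^*\,\bar X^{p^*\text{-MFG}}_T$, i.e. the terminal mean of the whole population in the $p^*$-partial mean field equilibrium; (ii) if $\big|\tfrac q2(1-e^{-2T})\big|<1$, then $(\bar X^n_T)_n$ converges as $n\to\infty$.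
   Context: Linear–quadratic example: $d=1$, $T>0$, $x_0\in\mathbb R$, $q\in\mathbb R$, $B$ a one-dimensional Brownian motion. For a square-integrable progressively measurable real control $\boldsymbol\alpha$, the state is $dX_t=\alpha_tdt+dB_t$, $X_0=x_0$. For a flow $\boldsymbol\mu$ with time-$T$ mean $\bar\mu_T$, $J(\boldsymbol\alpha;\boldsymbol\mu)=\mathbb E[\int_0^T\frac12(X_t^2+\alpha_t^2)dt+\frac12(X_T-q\bar\mu_T)^2]$. $\bar X^{\rm MFC}_T=\frac{2x_0}{e^T(1+(1-q)^2)+e^{-T}(1-(1-q)^2)}$ is the terminal mean of the (unique) MFC optimal state (MFC: minimize $J(\boldsymbol\alpha;(\mathcal L(X^{\boldsymbol\alpha}_t))_t)$). The quantity $\tilde{\bar X}^{n+1}_T$ is the terminal mean of the best response to an environment of terminal mean $\bar X^n_T$. For $p\in[0,1]$, $\bar X^{p\text{-MFG}}_T=\frac{2x_0+q(1-p)\bar X^{\rm MFC}_T(e^T-e^{-T})}{e^T(2-qp)+e^{-T}qp}$ is the terminal mean of the deviating players in the $p$-partial mean field equilibrium (a pair $(\hat{\boldsymbol\alpha}^p,p\hat{\boldsymbol\mu}^p+(1-p)\boldsymbol\mu^{\rm MFC})$ with $\hat\mu^p_t=\mathcal L(X^{\hat{\boldsymbol\alpha}^p}_t)$ and $\hat{\boldsymbol\alpha}^p$ minimizing $J(\cdot;p\hat{\boldsymbol\mu}^p+(1-p)\boldsymbol\mu^{\rm MFC})$), assuming its denominator is nonzero. *)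

theory Defs
  imports Complex_Main
begin

definition XMFC :: "real \<Rightarrow> real \<Rightarrow> real \<Rightarrow> real" where
  "XMFC T x0 q = 2 * x0 / (exp T * (1 + (1 - q)^2) + exp (- T) * (1 - (1 - q)^2))"

definition pMFG_denom :: "real \<Rightarrow> real \<Rightarrow> real \<Rightarrow> real" where
  "pMFG_denom T q p = exp T * (2 - q * p) + exp (- T) * q * p"

text \<open>Terminal mean of the deviating players in the p-partial mean field equilibrium.\<close>
definition XpMFG :: "real \<Rightarrow> real \<Rightarrow> real \<Rightarrow> real \<Rightarrow> real" where
  "XpMFG T x0 q p = (2 * x0 + q * (1 - p) * XMFC T x0 q * (exp T - exp (- T))) / pMFG_denom T q p"

definition Qprod :: "(nat \<Rightarrow> real) \<Rightarrow> nat \<Rightarrow> real" where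
  "Qprod p n = (\<Prod>i\<le>n. 1 - p i)"

text \<open>Best-response terminal mean to an environment with terminal mean m.\<close>
definition Xtilde :: "real \<Rightarrow> real \<Rightarrow> real \<Rightarrow> real \<Rightarrow> real" where
  "Xtilde T x0 q m = exp (- T) * x0 + 1/2 * q * m * (1 - exp (- 2 * T))"

end

theory Submission
  imports Defs
begin

text \<open>Both parts rest on one observation: the scheme is an affine recursion
  \<open>X (n+1) = \<alpha>\<^sub>n + \<beta>\<^sub>n X n\<close> whose coefficients
  \<open>\<alpha>\<^sub>n = Q\<^sub>n M + (1 - Q\<^sub>n) e\<^sup>-\<^sup>T x\<^sub>0\<close>,
  \<open>\<beta>\<^sub>n = (1 - Q\<^sub>n) c\<close> with \<open>c = q (1 - e\<^sup>-\<^sup>2\<^sup>T) / 2\<close>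
  converge because the products \<open>Q\<^sub>n\<close> decrease to \<open>1 - p\<^sup>*\<close>.
  A limit is therefore a fixed point of the limiting affine map, and that fixed point is
  the population mean of the \<open>p\<^sup>*\<close>-partial equilibrium (an explicit computation).
  If \<open>\<bar>c\<bar> < 1\<close>, all maps are contractions with the common constant \<open>\<bar>c\<bar>\<close>,
  and the distance to the limiting fixed point obeys a perturbed contraction inequality.\<close>

lemma LIMSEQ_zero_perturbed_contraction:
  fixes d e :: "nat \<Rightarrow> real" and k :: real
  assumes "0 \<le> k" "k < 1" "\<And>n. 0 \<le> d n"
    and step: "\<And>n. d (Suc n) \<le> k * d n + e n" and "e \<longlonglongrightarrow> 0"
  shows "d \<longlonglongrightarrow> 0"
proof (rule LIMSEQ_I)
  fix r :: real assume "0 < r"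
  then obtain N where N: "\<And>n. n \<ge> N \<Longrightarrow> \<bar>e n\<bar> < r * (1 - k) / 2"
    using LIMSEQ_D[OF \<open>e \<longlonglongrightarrow> 0\<close>, of "r * (1 - k) / 2"] \<open>k < 1\<close> by auto
  have tail: "d (N + m) \<le> k ^ m * d N + r / 2" for m
  proof (induction m)
    case 0
    then show ?case using \<open>0 < r\<close> by simp
  next
    case (Suc m)
    have "d (N + Suc m) \<le> k * d (N + m) + r * (1 - k) / 2"
      using step[of "N + m"] N[of "N + m"] by simp
    also have "\<dots> \<le> k * (k ^ m * d N + r / 2) + r * (1 - k) / 2"
      using Suc \<open>0 \<le> k\<close> by (simp add: mult_left_mono)
    also have "\<dots> = k ^ Suc m * d N + r / 2"
      by (simp add: algebra_simps diff_divide_distrib)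
    finally show ?case .
  qed
  have "(\<lambda>m. k ^ m * d N) \<longlonglongrightarrow> 0"
    by (intro tendsto_mult_left_zero LIMSEQ_power_zero) (use assms(1,2) in auto)
  then obtain M where M: "\<forall>m\<ge>M. norm (k ^ m * d N - 0) < r / 2"
    using LIMSEQ_D[OF _ half_gt_zero[OF \<open>0 < r\<close>]] by blast
  show "\<exists>n0. \<forall>n\<ge>n0. norm (d n - 0) < r"
  proof (intro exI allI impI)
    fix n assume "N + M \<le> n"
    then obtain m where "n = N + m" "M \<le> m" using le_Suc_ex by fastforce
    then show "norm (d n - 0) < r" using tail[of m] M assms(3)[of n] by auto
  qed
qed

lemma affine_recursion_limit:
  fixes x \<alpha> \<beta> :: "nat \<Rightarrow> 'a::real_normed_algebra"
  assumes "\<And>n. x (Suc n) = \<alpha> n + \<beta> n * x n"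
    and "x \<longlonglongrightarrow> L" "\<alpha> \<longlonglongrightarrow> a" "\<beta> \<longlonglongrightarrow> b"
  shows "L = a + b * L"
proof -
  have "(\<lambda>n. x (Suc n)) \<longlonglongrightarrow> a + b * L"
    unfolding assms(1) by (intro tendsto_intros assms(2-4))
  then show ?thesis using LIMSEQ_Suc[OF \<open>x \<longlonglongrightarrow> L\<close>] LIMSEQ_unique by blast
qed

lemma affine_recursion_converges:
  fixes x \<alpha> \<beta> :: "nat \<Rightarrow> 'a::real_normed_field"
  assumes rec: "\<And>n. x (Suc n) = \<alpha> n + \<beta> n * x n"
    and "\<alpha> \<longlonglongrightarrow> a" "\<beta> \<longlonglongrightarrow> b" and contr: "\<And>n. norm (\<beta> n) \<le> k" "k < 1"
  shows "x \<longlonglongrightarrow> a / (1 - b)"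
proof -
  have "norm b \<le> k" using tendsto_norm[OF \<open>\<beta> \<longlonglongrightarrow> b\<close>] contr(1)
    by (auto intro: tendsto_upperbound)
  then have "b \<noteq> 1" using \<open>k < 1\<close> by auto
  define z where "z = a / (1 - b)"
  have fixed: "z = a + b * z" using \<open>b \<noteq> 1\<close> unfolding z_def by (simp add: field_simps)
  define e where "e n = norm (\<alpha> n - a) + norm (\<beta> n - b) * norm z" for n
  have "e \<longlonglongrightarrow> norm (a - a) + norm (b - b) * norm z"
    unfolding e_def by (intro tendsto_intros assms(2,3))
  then have "e \<longlonglongrightarrow> 0" by simp
  have step: "norm (x (Suc n) - z) \<le> k * norm (x n - z) + e n" for n
  proof -
    have "x (Suc n) - z = (\<alpha> n - a) + (\<beta> n - b) * z + \<beta> n * (x n - z)"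
      by (subst fixed) (simp add: rec algebra_simps)
    also have "norm \<dots> \<le> norm (\<alpha> n - a) + norm (\<beta> n - b) * norm z + norm (\<beta> n) * norm (x n - z)"
      by (intro norm_triangle_le add_mono order.refl) (simp_all add: norm_mult)
    also have "\<dots> \<le> e n + k * norm (x n - z)"
      unfolding e_def using contr(1) by (intro add_left_mono mult_right_mono) auto
    finally show ?thesis by simp
  qed
  have "(\<lambda>n. norm (x n - z)) \<longlonglongrightarrow> 0"
    using LIMSEQ_zero_perturbed_contraction[OF _ \<open>k < 1\<close> _ step \<open>e \<longlonglongrightarrow> 0\<close>]
      norm_ge_zero order_trans[OF norm_ge_zero contr(1)] by blast
  then show ?thesis unfolding z_def[symmetric] by (simp add: LIM_zero_iff tendsto_norm_zero_iff)
qed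

lemma Qprod_nonneg: "(\<And>i. p i \<le> 1) \<Longrightarrow> 0 \<le> Qprod p n"
  unfolding Qprod_def by (intro prod_nonneg) auto

lemma Qprod_le_one: "(\<And>i. 0 \<le> p i \<and> p i \<le> 1) \<Longrightarrow> Qprod p n \<le> 1"
  unfolding Qprod_def by (intro prod_le_1) auto

lemma decseq_Qprod:
  assumes "\<And>i. 0 \<le> p i \<and> p i \<le> 1"
  shows "decseq (Qprod p)"
proof (rule decseq_SucI)
  fix n
  have "Qprod p n * (1 - p (Suc n)) \<le> Qprod p n"
    using Qprod_nonneg[of p n] assms by (simp add: mult_left_le)
  then show "Qprod p (Suc n) \<le> Qprod p n" unfolding Qprod_def by simp
qed

lemma convergent_Qprod:
  assumes "\<And>i. 0 \<le> p i \<and> p i \<le> 1"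
  shows "convergent (Qprod p)"
proof -
  have "decseq (Qprod p)" using assms by (rule decseq_Qprod)
  moreover have "\<forall>n. 0 \<le> Qprod p n" using Qprod_nonneg assms by blast
  ultimately show ?thesis by (auto simp: convergent_def elim: decseq_convergent)
qed

definition best_response_slope :: "real \<Rightarrow> real \<Rightarrow> real" where
  "best_response_slope T q = q / 2 * (1 - exp (- 2 * T))"

lemma Xtilde_affine:
  "Xtilde T x0 q m = exp (- T) * x0 + best_response_slope T q * m"
  unfolding Xtilde_def best_response_slope_def by simp

lemma pMFG_denom_eq:
  "pMFG_denom T q p = 2 * exp T * (1 - p * best_response_slope T q)"
proof -
  have "exp (- 2 * T) * exp T = exp (- T)" by (simp flip: exp_add)
  then show ?thesis
    unfolding pMFG_denom_def best_response_slope_def by (simp add: algebra_simps)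
qed

text \<open>The map \<open>m \<mapsto> (1 - p) M + p Xtilde m\<close> sends an environment mean to the
  population mean produced when the deviators best respond to it.\<close>
lemma pMFG_population_mean_unique_fixed_point:
  assumes "pMFG_denom T q p \<noteq> 0"
    and "L = (1 - p) * XMFC T x0 q + p * Xtilde T x0 q L"
  shows "L = (1 - p) * XMFC T x0 q + p * XpMFG T x0 q p"
proof -
  define M c where "M = XMFC T x0 q" and "c = best_response_slope T q"
  have nz: "1 - p * c \<noteq> 0" using assms(1) unfolding pMFG_denom_eq c_def by simp
  have num: "2 * x0 + q * (1 - p) * M * (exp T - exp (- T))
      = 2 * exp T * (exp (- T) * x0 + c * (1 - p) * M)"
  proof -
    have inv: "exp T * exp (- T) = 1" "exp T * exp (- 2 * T) = exp (- T)"
      by (simp_all flip: exp_add)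
    then have slope: "2 * exp T * c = q * (exp T - exp (- T))"
      unfolding c_def best_response_slope_def by (simp add: algebra_simps)
    have "2 * exp T * (exp (- T) * x0 + c * (1 - p) * M)
        = 2 * (exp T * exp (- T)) * x0 + (2 * exp T * c) * (1 - p) * M"
      by (simp add: algebra_simps)
    then show ?thesis unfolding inv(1) slope by (simp add: algebra_simps)
  qed
  have XpMFG: "XpMFG T x0 q p = (exp (- T) * x0 + c * (1 - p) * M) / (1 - p * c)"
    unfolding XpMFG_def M_def[symmetric] num pMFG_denom_eq c_def[symmetric] by simp
  have "L * (1 - p * c) = (1 - p) * M + p * exp (- T) * x0"
    using assms(2) unfolding Xtilde_affine M_def[symmetric] c_def[symmetric]
    by (simp add: algebra_simps)
  then show ?thesis unfolding XpMFG M_def[symmetric] using nz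
    by (simp add: field_simps)
qed

theorem mainTheorem16:
  fixes T x0 q :: real and p X :: "nat \<Rightarrow> real"
  assumes T: "T > 0"
    and p01: "\<forall>i. 0 \<le> p i \<and> p i \<le> 1"
    and X0: "X 0 = XMFC T x0 q"
    and XSuc: "\<forall>n. X (Suc n) = Qprod p n * XMFC T x0 q + (1 - Qprod p n) * Xtilde T x0 q (X n)"
  defines "pstar \<equiv> 1 - lim (Qprod p)"
  shows "(\<forall>L. X \<longlonglongrightarrow> L \<longrightarrow> pMFG_denom T q pstar \<noteq> 0 \<longrightarrow>
            L = (1 - pstar) * XMFC T x0 q + pstar * XpMFG T x0 q pstar)
         \<and> (\<bar>q / 2 * (1 - exp (- 2 * T))\<bar> < 1 \<longrightarrow> convergent X)"
proof -
  define M c where "M = XMFC T x0 q" and "c = best_response_slope T q"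
  define \<alpha> \<beta> where "\<alpha> n = Qprod p n * M + (1 - Qprod p n) * (exp (- T) * x0)"
    and "\<beta> n = (1 - Qprod p n) * c" for n
  have Q: "Qprod p \<longlonglongrightarrow> 1 - pstar" "(\<lambda>n. 1 - Qprod p n) \<longlonglongrightarrow> pstar"
    using convergent_Qprod[of p] p01 unfolding pstar_def convergent_LIMSEQ_iff
    by (auto intro: tendsto_diff)
  have rec: "X (Suc n) = \<alpha> n + \<beta> n * X n" for n
    using XSuc unfolding Xtilde_affine \<alpha>_def \<beta>_def M_def c_def by (simp add: algebra_simps)
  have \<alpha>: "\<alpha> \<longlonglongrightarrow> (1 - pstar) * M + pstar * (exp (- T) * x0)"
    unfolding \<alpha>_def by (intro tendsto_intros Q)
  have \<beta>: "\<beta> \<longlonglongrightarrow> pstar * c" unfolding \<beta>_def by (intro tendsto_intros Q)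
  have "L = (1 - pstar) * XMFC T x0 q + pstar * XpMFG T x0 q pstar"
    if "X \<longlonglongrightarrow> L" "pMFG_denom T q pstar \<noteq> 0" for L
  proof (rule pMFG_population_mean_unique_fixed_point[OF that(2)])
    show "L = (1 - pstar) * XMFC T x0 q + pstar * Xtilde T x0 q L"
      using affine_recursion_limit[OF rec that(1) \<alpha> \<beta>]
      by (simp add: Xtilde_affine M_def c_def algebra_simps)
  qed
  moreover have "convergent X" if "\<bar>c\<bar> < 1"
  proof -
    have "\<bar>\<beta> n\<bar> \<le> \<bar>c\<bar>" for n
      using Qprod_nonneg[of p n] Qprod_le_one[of p n] p01
      by (simp add: \<beta>_def abs_mult mult_left_le_one_le)
    then show ?thesis
      using affine_recursion_converges[OF rec \<alpha> \<beta> _ that] by (auto simp: convergent_def)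
  qed
  ultimately show ?thesis unfolding c_def best_response_slope_def by blast
qed

end
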